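(* Let $f:X\to Y$ be a regular local homeomorphism between metric spaces. Suppose that $X$ is complete and $Y$ is path-connected and locally $\mathcal R$-contractible. If $f$ satisfies the Hadamard integral condition, then $f$ is a covering projection.
   Context: For non-isolated $x\in X$, $D_x^-f=\liminf_{z\to x,\,z\neq x}\frac{d(f(z),f(x))}{d(z,x)}$; $X$ is assumed to have no isolated points. $f$ is regular if $0<D_x^-f<\infty$ for every $x\in X$. $f$ satisfies the Hadamard integral condition if for some $x_0\in X$, $\int_0^\infty\inf_{x\in\overline{B_t(x_0)}}D_x^-f\,dt=\infty$, where $\overline{B_t(x_0)}=\{x:d(x,x_0)\le t\}$. A path $p:[0,1]\to Y$ is rectifiable if its length $\sup\sum_i d(p(t_i),p(t_{i+1}))$ over partitions is finite. $Y$ is locally $\mathcal R$-contractible if every $y_0\in Y$ has an open neighborhood $U$ with a continuous homotopy $H:U\times[0,1]\to U$ such that $H(y_0,t)=y_0$ for all $t$, $H(y,0)=y_0$, $H(y,1)=y$ for all $y\in U$, and each path $t\mapsto H(y,t)$ is rectifiable. *)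

theory Defs
  imports "HOL-Analysis.Analysis"
begin

definition lower_dini :: "('a::metric_space \<Rightarrow> 'b::metric_space) \<Rightarrow> 'a \<Rightarrow> ereal" where
  "lower_dini f x = Liminf (at x) (\<lambda>z. ereal (dist (f z) (f x) / dist z x))"

definition regular_map :: "('a::metric_space \<Rightarrow> 'b::metric_space) \<Rightarrow> bool" where
  "regular_map f \<longleftrightarrow> (\<forall>x. 0 < lower_dini f x \<and> lower_dini f x < \<infinity>)"

definition hadamard_integral_condition :: "('a::metric_space \<Rightarrow> 'b::metric_space) \<Rightarrow> bool" where
  "hadamard_integral_condition f \<longleftrightarrow>
     (\<exists>x0. (\<integral>\<^sup>+ t \<in> {0..}. e2ennreal (INF x\<in>cball x0 t. lower_dini f x) \<partial>lborel) = \<infinity>)"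

definition local_homeo :: "('a::topological_space \<Rightarrow> 'b::topological_space) \<Rightarrow> bool" where
  "local_homeo f \<longleftrightarrow>
     (\<forall>x. \<exists>U V g. open U \<and> x \<in> U \<and> open V \<and> homeomorphism U V f g)"

definition rectifiable_path :: "(real \<Rightarrow> 'b::metric_space) \<Rightarrow> bool" where
  "rectifiable_path p \<longleftrightarrow>
     (\<exists>B. \<forall>(n::nat) (ts::nat \<Rightarrow> real).
        ts 0 = 0 \<and> ts n = 1 \<and> (\<forall>i<n. ts i \<le> ts (Suc i)) \<longrightarrow>
        (\<Sum>i<n. dist (p (ts i)) (p (ts (Suc i)))) \<le> B)"

definition locally_R_contractible :: "'b::metric_space set \<Rightarrow> bool" where
  "locally_R_contractible Y \<longleftrightarrow>
     (\<forall>y0\<in>Y. \<exists>U H. openin (top_of_set Y) U \<and> y0 \<in> U \<and>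
        continuous_on (U \<times> {0..1}) H \<and> H ` (U \<times> {0..1}) \<subseteq> U \<and>
        (\<forall>t\<in>{0..1}. H (y0, t) = y0) \<and>
        (\<forall>y\<in>U. H (y, 0) = y0 \<and> H (y, 1) = y) \<and>
        (\<forall>y\<in>U. rectifiable_path (\<lambda>t. H (y, t))))"

end

theory Submission
  imports Defs
begin

text \<open>Let \<open>m(r)\<close> be the infimum of the lower Dini derivative of \<open>f\<close> over the closed \<open>r\<close>-ball about
  \<open>x0\<close> and \<open>M(r) = \<integral>\<^sub>0\<^sup>r m\<close>. Along a lift \<open>q\<close> of a path \<open>p\<close>, \<open>M(d(x0, q t))\<close> grows at most
  as fast as the length of \<open>p\<close>; since the Hadamard condition makes \<open>M\<close> unbounded, lifts of a
  rectifiable path stay in a fixed ball, where \<open>f\<close> expands distances by the factor \<open>m(R) > 0\<close>.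
  Their end points are therefore Cauchy, and completeness of \<open>X\<close> lets every rectifiable path be
  lifted (by real induction along the parameter). Lifting the rectifiable tracks of a local
  contraction of \<open>U\<close> to \<open>y0\<close> from every point of the fibre over \<open>y0\<close> gives continuous sections of
  \<open>f\<close> over \<open>U\<close>; by uniqueness of lifts their images are disjoint open sheets exhausting
  \<open>f\<^sup>-\<^sup>1(U)\<close>. Finally \<open>f\<close> is onto because \<open>Y\<close> is connected.\<close>

section \<open>Real induction\<close>

lemma real_interval_induct [consumes 1, case_names start step limit]:
  fixes P :: "real \<Rightarrow> bool"
  assumes "a \<le> b" and start: "P a"
    and step: "\<And>x. a \<le> x \<Longrightarrow> x < b \<Longrightarrow> P x \<Longrightarrow> \<exists>d>0. \<forall>y. x < y \<and> y < x + d \<and> y \<le> b \<longrightarrow> P y"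
    and limit: "\<And>x. a < x \<Longrightarrow> x \<le> b \<Longrightarrow> (\<And>y. a \<le> y \<Longrightarrow> y < x \<Longrightarrow> P y) \<Longrightarrow> P x"
  shows "P b"
proof -
  define T where "T = {x. a \<le> x \<and> x \<le> b \<and> (\<forall>y. a \<le> y \<and> y \<le> x \<longrightarrow> P y)}"
  define s where "s = Sup T"
  have aT: "a \<in> T" using assms(1) start by (auto simp: T_def)
  have bdd: "bdd_above T" by (auto simp: T_def bdd_above_def)
  have as: "a \<le> s" unfolding s_def by (rule cSup_upper[OF aT bdd])
  have sb: "s \<le> b" unfolding s_def by (rule cSup_least) (use aT T_def in auto)
  have below: "P y" if "a \<le> y" "y < s" for y
  proof -
    obtain x where "x \<in> T" "y < x" using less_cSup_iff[OF _ bdd, of y] aT \<open>y < s\<close> s_def by blast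
    then show ?thesis using that by (auto simp: T_def)
  qed
  have "P s"
    using as below start limit[of s] sb by (cases "a = s") auto
  then have sT: "s \<in> T" using as sb below by (auto simp: T_def order_le_less)
  have "s = b"
  proof (rule ccontr)
    assume "s \<noteq> b"
    then obtain d where d: "d > 0" "\<forall>y. s < y \<and> y < s + d \<and> y \<le> b \<longrightarrow> P y"
      using step[OF as _ \<open>P s\<close>] sb by fastforce
    define s' where "s' = min b (s + d / 2)"
    have "P y" if "a \<le> y" "y \<le> s'" for y
      using sT d that by (cases "y \<le> s") (auto simp: T_def s'_def)
    then have "s' \<in> T"
      using as sb d(1) by (auto simp: T_def s'_def)
    then have "s' \<le> s" unfolding s_def by (rule cSup_upper[OF _ bdd])
    then show False using \<open>s \<noteq> b\<close> sb d(1) by (auto simp: s'_def)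
  qed
  then show ?thesis using \<open>P s\<close> by simp
qed

section \<open>Variation of a path\<close>

definition partition_sums :: "(real \<Rightarrow> 'b::metric_space) \<Rightarrow> real \<Rightarrow> real set" where
  "partition_sums p t = {(\<Sum>i<n. dist (p (ts i)) (p (ts (Suc i)))) | n ts.
      ts 0 = 0 \<and> ts n = t \<and> (\<forall>i<n. ts i \<le> ts (Suc i))}"

definition path_variation :: "(real \<Rightarrow> 'b::metric_space) \<Rightarrow> real \<Rightarrow> real" where
  "path_variation p t = Sup (partition_sums p t)"

lemma rectifiable_path_iff_bdd_above: "rectifiable_path p \<longleftrightarrow> bdd_above (partition_sums p 1)"
  unfolding rectifiable_path_def partition_sums_def bdd_above_def by blast

lemma zero_in_partition_sums: "0 \<in> partition_sums p 0"
  unfolding partition_sums_def by (rule CollectI, rule exI[of _ 0], rule exI[of _ "\<lambda>_. 0"]) simp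

lemma partition_sums_extend:
  assumes "s \<in> partition_sums p u" "u \<le> v"
  shows "s + dist (p u) (p v) \<in> partition_sums p v"
proof -
  obtain n ts where s: "s = (\<Sum>i<n. dist (p (ts i)) (p (ts (Suc i))))"
    and ts: "ts 0 = 0" "ts n = u" "\<forall>i<n. ts i \<le> ts (Suc i)"
    using assms(1) unfolding partition_sums_def by blast
  define ts' where "ts' = ts(Suc n := v)"
  have "(\<Sum>i<Suc n. dist (p (ts' i)) (p (ts' (Suc i)))) = s + dist (p u) (p v)"
    unfolding s using ts(2) by (simp add: ts'_def)
  moreover have "\<forall>i<Suc n. ts' i \<le> ts' (Suc i)"
    using ts assms(2) by (auto simp: ts'_def less_Suc_eq)
  ultimately show ?thesis
    unfolding partition_sums_def using ts(1) by (auto simp: ts'_def intro!: exI[of _ "Suc n"] exI[of _ ts'])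
qed

lemma path_variation_superadditive:
  assumes "rectifiable_path p" "0 \<le> u" "u \<le> v" "v \<le> 1"
  shows "path_variation p u + dist (p u) (p v) \<le> path_variation p v"
proof -
  have bdd: "bdd_above (partition_sums p v)"
  proof -
    obtain B where B: "\<And>s. s \<in> partition_sums p 1 \<Longrightarrow> s \<le> B"
      using assms(1) by (auto simp: rectifiable_path_iff_bdd_above bdd_above_def)
    have "s \<le> B" if "s \<in> partition_sums p v" for s
      using B[OF partition_sums_extend[OF that assms(4)]] zero_le_dist[of "p v" "p 1"] by linarith
    then show ?thesis by (auto simp: bdd_above_def)
  qed
  have "partition_sums p u \<noteq> {}"
    using partition_sums_extend[OF zero_in_partition_sums assms(2)] by blast
  then have "path_variation p u \<le> path_variation p v - dist (p u) (p v)"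
    unfolding path_variation_def
    by (rule cSup_least) (use cSup_upper[OF partition_sums_extend bdd] assms(3) in fastforce)
  then show ?thesis by simp
qed

lemma partition_sums_reverse: "partition_sums (\<lambda>t. p (1 - t)) 1 \<subseteq> partition_sums p 1"
proof
  fix s assume "s \<in> partition_sums (\<lambda>t. p (1 - t)) 1"
  then obtain n ts where s: "s = (\<Sum>i<n. dist (p (1 - ts i)) (p (1 - ts (Suc i))))"
    and ts: "ts 0 = 0" "ts n = 1" "\<forall>i<n. ts i \<le> ts (Suc i)"
    unfolding partition_sums_def by blast
  define ts' where "ts' i = 1 - ts (n - i)" for i
  have "\<forall>i<n. ts' i \<le> ts' (Suc i)"
  proof (intro allI impI)
    fix i assume "i < n"
    then have "n - i = Suc (n - Suc i)" by simp
    then show "ts' i \<le> ts' (Suc i)" using ts(3) \<open>i < n\<close> by (simp add: ts'_def)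
  qed
  moreover have "s = (\<Sum>i<n. dist (p (ts' i)) (p (ts' (Suc i))))"
  proof -
    have "n - (n - Suc i) = Suc i" "n - Suc (n - Suc i) = i" if "i < n" for i
      using that by simp_all
    then have "s = (\<Sum>i<n. dist (p (ts' (n - Suc i))) (p (ts' (Suc (n - Suc i)))))"
      unfolding s ts'_def by (intro sum.cong) (simp_all add: dist_commute)
    also have "\<dots> = (\<Sum>i<n. dist (p (ts' i)) (p (ts' (Suc i))))"
      by (rule sum.nat_diff_reindex)
    finally show ?thesis .
  qed
  moreover have "ts' 0 = 0" "ts' n = 1" using ts(1,2) by (simp_all add: ts'_def)
  ultimately show "s \<in> partition_sums p 1"
    unfolding partition_sums_def by blast
qed

lemma rectifiable_path_reverse: "rectifiable_path p \<Longrightarrow> rectifiable_path (\<lambda>t. p (1 - t))"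
  unfolding rectifiable_path_iff_bdd_above by (rule bdd_above_mono[OF _ partition_sums_reverse])

lemma increment_le_variation_increment:
  fixes \<Phi> L :: "real \<Rightarrow> real" and p :: "real \<Rightarrow> 'b::metric_space"
  assumes "a \<le> b" and \<Phi>: "continuous_on {a..b} \<Phi>"
    and L: "\<And>u v. a \<le> u \<Longrightarrow> u \<le> v \<Longrightarrow> v \<le> b \<Longrightarrow> L u + dist (p u) (p v) \<le> L v"
    and local: "\<And>t. a \<le> t \<Longrightarrow> t < b \<Longrightarrow>
      \<exists>d>0. \<forall>t'. t < t' \<and> t' < t + d \<and> t' \<le> b \<longrightarrow> \<Phi> t' - \<Phi> t \<le> dist (p t) (p t')"
  shows "\<Phi> b - \<Phi> a \<le> L b - L a"
proof -
  have L_mono: "L u \<le> L v" if "a \<le> u" "u \<le> v" "v \<le> b" for u v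
    using L[OF that] zero_le_dist[of "p u" "p v"] by linarith
  show ?thesis
    using \<open>a \<le> b\<close>
  proof (induction rule: real_interval_induct)
    case start
    then show ?case by simp
  next
    case (step x)
    then obtain d where "d > 0"
      and d: "\<And>t'. x < t' \<Longrightarrow> t' < x + d \<Longrightarrow> t' \<le> b \<Longrightarrow> \<Phi> t' - \<Phi> x \<le> dist (p x) (p t')"
      using local by blast
    have "\<Phi> y - \<Phi> a \<le> L y - L a" if "x < y" "y < x + d" "y \<le> b" for y
    proof -
      have "L x + dist (p x) (p y) \<le> L y" using step.hyps that by (intro L) auto
      then show ?thesis using step.IH d[OF that] by linarith
    qed
    then show ?case using \<open>d > 0\<close> by blast
  next
    case (limit x)
    have "\<Phi> y - \<Phi> a - (L x - L a) \<le> 0" if "y \<in> {a..<x}" for y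
      using limit.IH[of y] L_mono[of y x] that limit.hyps by simp
    moreover have "continuous_on (closure {a..<x}) (\<lambda>y. \<Phi> y - \<Phi> a - (L x - L a))"
      using limit.hyps continuous_on_subset[OF \<Phi>]
      by (auto simp: closure_atLeastLessThan intro!: continuous_intros)
    ultimately have "\<Phi> x - \<Phi> a - (L x - L a) \<le> 0"
      using continuous_le_on_closure[of "{a..<x}" "\<lambda>y. \<Phi> y - \<Phi> a - (L x - L a)" x 0] limit.hyps
      by (simp add: closure_atLeastLessThan)
    then show ?case by simp
  qed
qed

section \<open>Lifts through local homeomorphisms\<close>

lemma local_homeoE:
  assumes "local_homeo f"
  obtains A V g where "open A" "x \<in> A" "open V" "homeomorphism A V f g"
  using assms unfolding local_homeo_def by blast

lemma local_homeo_isCont: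
  fixes f :: "'a::metric_space \<Rightarrow> 'b::metric_space"
  assumes "local_homeo f"
  shows "isCont f x"
proof -
  obtain A V g where "open A" "x \<in> A" "homeomorphism A V f g"
    using local_homeoE[OF assms] by metis
  then show ?thesis
    using continuous_on_eq_continuous_at homeomorphism_cont1 by blast
qed

lemma local_homeo_continuous_on:
  fixes f :: "'a::metric_space \<Rightarrow> 'b::metric_space"
  shows "local_homeo f \<Longrightarrow> continuous_on S f"
  by (simp add: continuous_at_imp_continuous_on local_homeo_isCont)

lemma open_range_local_homeo:
  assumes "local_homeo f"
  shows "open (range f)"
  unfolding open_subopen[of "range f"]
proof
  fix y assume "y \<in> range f"
  then obtain x where "y = f x" by blast
  obtain A V g where "open A" "x \<in> A" "open V" "homeomorphism A V f g"
    using local_homeoE[OF assms] by metis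
  moreover from this have "f ` A = V" by (simp add: homeomorphism_image1)
  ultimately show "\<exists>V. open V \<and> y \<in> V \<and> V \<subseteq> range f"
    using \<open>y = f x\<close> by blast
qed

lemma local_homeo_section_open:
  fixes f :: "'a::metric_space \<Rightarrow> 'b::metric_space"
  assumes lh: "local_homeo f" and U: "open U" and \<sigma>: "continuous_on U \<sigma>"
    and f\<sigma>: "\<And>y. y \<in> U \<Longrightarrow> f (\<sigma> y) = y"
  shows "open (\<sigma> ` U)"
  unfolding open_subopen[of "\<sigma> ` U"]
proof
  fix x assume "x \<in> \<sigma> ` U"
  then obtain y where y: "y \<in> U" "x = \<sigma> y" by blast
  obtain A V g where A: "open A" "x \<in> A" "homeomorphism A V f g"
    using local_homeoE[OF lh] by metis
  define W where "W = A \<inter> f -` (\<sigma> -` A \<inter> U)"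
  have "open (\<sigma> -` A \<inter> U)"
    using continuous_on_open_vimage[OF U] \<sigma> A(1) by blast
  then have "open W"
    unfolding W_def using A(1) continuous_open_vimage local_homeo_isCont[OF lh] by blast
  moreover have "x \<in> W" using A(2) y f\<sigma> by (auto simp: W_def)
  moreover have "a \<in> \<sigma> ` U" if "a \<in> W" for a
  proof -
    have "a \<in> A" "\<sigma> (f a) \<in> A" "f a \<in> U" using that by (auto simp: W_def)
    then have "\<sigma> (f a) = a"
      using f\<sigma> homeomorphism_apply1[OF A(3)] by metis
    then show ?thesis using \<open>f a \<in> U\<close> by force
  qed
  ultimately show "\<exists>W. open W \<and> x \<in> W \<and> W \<subseteq> \<sigma> ` U" by blast
qed

lemma continuous_on_near_in_open:
  fixes p :: "'a::metric_space \<Rightarrow> 'b::metric_space"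
  assumes "continuous_on S p" "s \<in> S" "open V" "p s \<in> V"
  shows "\<exists>d>0. \<forall>u\<in>S. dist u s < d \<longrightarrow> p u \<in> V"
proof -
  obtain e where "e > 0" "ball (p s) e \<subseteq> V" using assms(3,4) openE by blast
  moreover obtain d where "d > 0" "\<forall>u\<in>S. dist u s < d \<longrightarrow> dist (p u) (p s) < e"
    using continuous_on_iff[THEN iffD1, OF assms(1), rule_format, OF assms(2) \<open>e > 0\<close>] by blast
  ultimately show ?thesis by (metis dist_commute mem_ball subsetD)
qed

definition is_lift ::
    "('a::topological_space \<Rightarrow> 'b) \<Rightarrow> 'c::topological_space set \<Rightarrow> ('c \<Rightarrow> 'b) \<Rightarrow> ('c \<Rightarrow> 'a) \<Rightarrow> bool" where
  "is_lift f S p q \<longleftrightarrow> continuous_on S q \<and> (\<forall>t\<in>S. f (q t) = p t)"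

lemma is_lift_subset: "is_lift f S p q \<Longrightarrow> T \<subseteq> S \<Longrightarrow> is_lift f T p q"
  by (auto simp: is_lift_def intro: continuous_on_subset)

lemma is_lift_unique:
  fixes f :: "'a::metric_space \<Rightarrow> 'b::metric_space"
  assumes lh: "local_homeo f" and S: "connected S"
    and q1: "is_lift f S p q1" and q2: "is_lift f S p q2"
    and "s \<in> S" "q1 s = q2 s" "t \<in> S"
  shows "q1 t = q2 t"
proof -
  define E where "E = {t \<in> S. q1 t = q2 t}"
  have c: "continuous_on S q1" "continuous_on S q2" using q1 q2 by (simp_all add: is_lift_def)
  have "closedin (top_of_set S) {t \<in> topspace (top_of_set S). q1 t = q2 t}"
    by (rule closedin_continuous_maps_eq[OF Hausdorff_space_euclidean])
      (simp_all add: continuous_map_iff_continuous c)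
  then have "closedin (top_of_set S) E" by (simp add: E_def)
  moreover have "openin (top_of_set S) E"
  proof (subst openin_subopen, intro ballI)
    fix u assume "u \<in> E"
    obtain A V g where A: "open A" "q1 u \<in> A" "homeomorphism A V f g"
      using local_homeoE[OF lh] by metis
    define T where "T = (S \<inter> q1 -` A) \<inter> (S \<inter> q2 -` A)"
    have "openin (top_of_set S) T"
      unfolding T_def by (intro openin_Int continuous_openin_preimage_gen c A(1))
    moreover have "u \<in> T" using \<open>u \<in> E\<close> A(2) by (auto simp: T_def E_def)
    moreover have "w \<in> E" if "w \<in> T" for w
    proof -
      have "w \<in> S" "q1 w \<in> A" "q2 w \<in> A" using that by (auto simp: T_def)
      moreover have "f (q1 w) = f (q2 w)" using q1 q2 \<open>w \<in> S\<close> by (simp add: is_lift_def)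
      ultimately have "q1 w = q2 w" using homeomorphism_apply1[OF A(3)] by metis
      then show ?thesis using \<open>w \<in> S\<close> by (simp add: E_def)
    qed
    ultimately show "\<exists>T. openin (top_of_set S) T \<and> u \<in> T \<and> T \<subseteq> E" by blast
  qed
  moreover have "E \<noteq> {}" using assms(5,6) by (auto simp: E_def)
  ultimately have "E = S" using S unfolding connected_clopen by blast
  then show ?thesis using \<open>t \<in> S\<close> by (auto simp: E_def)
qed

lemma is_lift_eq_chart_inverse:
  fixes f :: "'a::metric_space \<Rightarrow> 'b::metric_space" and p :: "real \<Rightarrow> 'b"
  assumes lh: "local_homeo f" and g: "homeomorphism A V f g"
    and q: "is_lift f {a..b} p q" and p: "continuous_on {a..b} p" "p ` {a..b} \<subseteq> V"
    and "q a \<in> A" "t \<in> {a..b}"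
  shows "q t = g (p t)"
proof -
  have a: "a \<in> {a..b}" using \<open>t \<in> {a..b}\<close> by auto
  have "is_lift f {a..b} p (\<lambda>t. g (p t))"
    using continuous_on_compose2[OF homeomorphism_cont2[OF g] p] p(2) homeomorphism_apply2[OF g]
    by (auto simp: is_lift_def)
  moreover have "q a = g (p a)"
    using q a homeomorphism_apply1[OF g \<open>q a \<in> A\<close>] by (auto simp: is_lift_def)
  ultimately show ?thesis
    using is_lift_unique[OF lh connected_Icc q _ a _ \<open>t \<in> {a..b}\<close>] by blast
qed

lemma is_lift_extend_through_chart:
  fixes q :: "real \<Rightarrow> 'a::topological_space"
  assumes q: "is_lift f {a..t} p q" and "a \<le> t" "t \<le> \<tau>"
    and g: "homeomorphism A V f g" "q t \<in> A"
    and p: "continuous_on {t..\<tau>} p" "p ` {t..\<tau>} \<subseteq> V"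
  shows "is_lift f {a..\<tau>} p (\<lambda>u. if u \<le> t then q u else g (p u))"
  unfolding is_lift_def
proof
  have "f (q t) = p t" using q \<open>a \<le> t\<close> by (simp add: is_lift_def)
  then have "q t = g (p t)" using homeomorphism_apply1[OF g] by metis
  moreover have "continuous_on {t..\<tau>} (g \<circ> p)"
    using continuous_on_compose[OF p(1) continuous_on_subset[OF homeomorphism_cont2[OF g(1)] p(2)]] .
  ultimately show "continuous_on {a..\<tau>} (\<lambda>u. if u \<le> t then q u else g (p u))"
    using q unfolding is_lift_def
    by (intro continuous_on_cases_le) (auto intro: continuous_on_subset continuous_on_id)
  show "\<forall>u\<in>{a..\<tau>}. f (if u \<le> t then q u else g (p u)) = p u"
    using q p homeomorphism_apply2[OF g(1)] by (auto simp: is_lift_def image_subset_iff)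
qed

section \<open>Expansion along lifts\<close>

lemma less_lower_diniD:
  assumes "ereal r < lower_dini f x"
  shows "\<exists>d>0. \<forall>z. dist z x < d \<longrightarrow> r * dist z x \<le> dist (f z) (f x)"
proof -
  have "\<forall>\<^sub>F z in at x. ereal r < ereal (dist (f z) (f x) / dist z x)"
    using less_LiminfD[OF assms[unfolded lower_dini_def]] .
  then obtain d where "d > 0" and d: "\<And>z. z \<noteq> x \<Longrightarrow> dist z x < d \<Longrightarrow> r < dist (f z) (f x) / dist z x"
    unfolding eventually_at by auto
  have "r * dist z x \<le> dist (f z) (f x)" if "dist z x < d" for z
    using d[OF _ that] by (cases "z = x") (auto simp: pos_less_divide_eq less_imp_le)
  then show ?thesis using \<open>d > 0\<close> by blast
qed

text \<open>\<open>M\<close> plays the role of a primitive of the decreasing function \<open>m\<close>, of which only the tangent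
  bound \<open>M v \<le> M u + m u * (v - u)\<close> is used.\<close>
lemma lift_growth_le_variation_increment:
  fixes f :: "'a::metric_space \<Rightarrow> 'b::metric_space" and p :: "real \<Rightarrow> 'b"
    and M m :: "real \<Rightarrow> real"
  assumes "a \<le> b" and q: "is_lift f {a..b} p q"
    and L: "\<And>u v. a \<le> u \<Longrightarrow> u \<le> v \<Longrightarrow> v \<le> b \<Longrightarrow> L u + dist (p u) (p v) \<le> L v"
    and M_cont: "continuous_on {0..} M"
    and M_mono: "\<And>u v. 0 \<le> u \<Longrightarrow> u \<le> v \<Longrightarrow> M u \<le> M v"
    and M_tangent: "\<And>u v. 0 \<le> u \<Longrightarrow> u \<le> v \<Longrightarrow> M v \<le> M u + m u * (v - u)"
    and m: "\<And>r. 0 \<le> r \<Longrightarrow> 0 \<le> m r"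
    and dini: "\<And>t. t \<in> {a..b} \<Longrightarrow> ereal (m (dist c (q t))) < lower_dini f (q t)"
  shows "M (dist c (q b)) - M (dist c (q a)) \<le> L b - L a"
proof (rule increment_le_variation_increment[OF \<open>a \<le> b\<close> _ L])
  have qc: "continuous_on {a..b} q" using q by (simp add: is_lift_def)
  show "continuous_on {a..b} (\<lambda>t. M (dist c (q t)))"
    by (rule continuous_on_compose2[OF M_cont]) (auto intro!: continuous_intros qc)
  fix t assume t: "a \<le> t" "t < b"
  define r0 where "r0 = dist c (q t)"
  obtain dz where "dz > 0" and dz: "\<And>z. dist z (q t) < dz \<Longrightarrow> m r0 * dist z (q t) \<le> dist (f z) (f (q t))"
    using less_lower_diniD[OF dini[of t]] t unfolding r0_def by auto
  obtain d where "d > 0" and d: "\<And>t'. t' \<in> {a..b} \<Longrightarrow> dist t' t < d \<Longrightarrow> dist (q t') (q t) < dz"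
    using continuous_on_iff[THEN iffD1, OF qc, rule_format, of t dz] t \<open>dz > 0\<close> by auto
  have "M (dist c (q t')) - M r0 \<le> dist (p t) (p t')" if t': "t < t'" "t' < t + d" "t' \<le> b" for t'
  proof (cases "dist c (q t') \<le> r0")
    case True
    then show ?thesis
      using M_mono[OF zero_le_dist True] zero_le_dist[of "p t" "p t'"] unfolding r0_def by linarith
  next
    case False
    have "M (dist c (q t')) - M r0 \<le> m r0 * (dist c (q t') - r0)"
      using M_tangent[of r0 "dist c (q t')"] False by (simp add: r0_def)
    also have "\<dots> \<le> m r0 * dist (q t') (q t)"
      using m[of r0] dist_triangle[of c "q t'" "q t"]
      by (intro mult_left_mono) (auto simp: r0_def dist_commute)
    also have "\<dots> \<le> dist (p t') (p t)"
      using dz[OF d] t t' q by (auto simp: is_lift_def dist_real_def)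
    finally show ?thesis by (simp add: dist_commute)
  qed
  then show "\<exists>d>0. \<forall>t'. t < t' \<and> t' < t + d \<and> t' \<le> b \<longrightarrow>
      M (dist c (q t')) - M (dist c (q t)) \<le> dist (p t) (p t')"
    using \<open>d > 0\<close> unfolding r0_def by blast
qed

lemma lift_dist_le_variation_increment:
  fixes f :: "'a::metric_space \<Rightarrow> 'b::metric_space" and p :: "real \<Rightarrow> 'b"
  assumes "a \<le> b" and q: "is_lift f {a..b} p q"
    and L: "\<And>u v. a \<le> u \<Longrightarrow> u \<le> v \<Longrightarrow> v \<le> b \<Longrightarrow> L u + dist (p u) (p v) \<le> L v"
    and "0 \<le> \<mu>" and dini: "\<And>t. t \<in> {a..b} \<Longrightarrow> ereal \<mu> < lower_dini f (q t)"
  shows "\<mu> * dist (q a) (q b) \<le> L b - L a"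
proof -
  have "\<mu> * dist (q a) (q b) - \<mu> * dist (q a) (q a) \<le> L b - L a"
    by (rule lift_growth_le_variation_increment[where M = "\<lambda>r. \<mu> * r" and m = "\<lambda>_. \<mu>", OF \<open>a \<le> b\<close> q L])
      (use \<open>0 \<le> \<mu>\<close> dini in \<open>auto intro: continuous_intros mult_right_mono simp: algebra_simps\<close>)
  then show ?thesis by simp
qed

lemma nn_integral_antimono_interval_le:
  fixes m :: "real \<Rightarrow> real"
  assumes "antimono m" "u \<le> v"
  shows "(\<integral>\<^sup>+ t. ennreal (m t) * indicator {u..v} t \<partial>lborel) \<le> ennreal (m u * (v - u))"
proof -
  have "(\<integral>\<^sup>+ t. ennreal (m t) * indicator {u..v} t \<partial>lborel)
      \<le> (\<integral>\<^sup>+ t. ennreal (m u) * indicator {u..v} t \<partial>lborel)"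
    using assms by (intro nn_integral_mono) (auto simp: indicator_def antimonoD intro: ennreal_leI)
  also have "\<dots> = ennreal (m u * (v - u))"
    using assms(2) by (simp add: nn_integral_cmult_indicator ennreal_mult'')
  finally show ?thesis .
qed

lemma borel_measurable_antimono:
  fixes m :: "real \<Rightarrow> real"
  assumes "antimono m"
  shows "m \<in> borel_measurable borel"
proof -
  have "(\<lambda>t. - m t) \<in> borel_measurable borel"
    using assms by (intro borel_measurable_mono) (auto simp: mono_def antimono_def)
  then show ?thesis using borel_measurable_uminus[of "\<lambda>t. - m t"] by simp
qed

lemma nn_integral_antimono_tangent:
  fixes m :: "real \<Rightarrow> real"
  assumes "antimono m" "0 \<le> u" "u \<le> v"
  shows "(\<integral>\<^sup>+ t. ennreal (m t) * indicator {0..v} t \<partial>lborel)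
    \<le> (\<integral>\<^sup>+ t. ennreal (m t) * indicator {0..u} t \<partial>lborel) + ennreal (m u * (v - u))"
proof -
  have meas: "(\<lambda>t. ennreal (m t)) \<in> borel_measurable lborel"
    using borel_measurable_antimono[OF assms(1)] by (simp add: measurable_lborel2)
  have "(\<integral>\<^sup>+ t. ennreal (m t) * indicator {0..v} t \<partial>lborel)
      \<le> (\<integral>\<^sup>+ t. ennreal (m t) * indicator {0..u} t + ennreal (m t) * indicator {u..v} t \<partial>lborel)"
    using assms by (intro nn_integral_mono) (auto simp: indicator_def)
  also have "\<dots> = (\<integral>\<^sup>+ t. ennreal (m t) * indicator {0..u} t \<partial>lborel)
      + (\<integral>\<^sup>+ t. ennreal (m t) * indicator {u..v} t \<partial>lborel)"
    using meas by (intro nn_integral_add) auto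
  finally show ?thesis
    using nn_integral_antimono_interval_le[OF assms(1,3)] by (meson add_left_mono order_trans)
qed

lemma nn_integral_atLeast_0_SUP:
  fixes g :: "real \<Rightarrow> ennreal"
  assumes "g \<in> borel_measurable lborel"
  shows "(\<integral>\<^sup>+ t\<in>{0..}. g t \<partial>lborel) = (SUP n. \<integral>\<^sup>+ t. g t * indicator {0..real n} t \<partial>lborel)"
proof -
  have "(\<lambda>t. g t * indicator {0..} t) = (\<lambda>t. SUP n. g t * indicator {0..real n} t)"
  proof
    fix t
    show "g t * indicator {0..} t = (SUP n. g t * indicator {0..real n} t)"
    proof (rule antisym)
      have "g t * indicator {0..} t = g t * indicator {0..real (nat \<lceil>t\<rceil>)} t"
        by (simp add: indicator_def)
      also have "\<dots> \<le> (SUP n. g t * indicator {0..real n} t)" by (rule SUP_upper) simp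
      finally show "g t * indicator {0..} t \<le> (SUP n. g t * indicator {0..real n} t)" .
    qed (auto simp: indicator_def intro!: SUP_least)
  qed
  then show ?thesis
    using assms
    by (simp, intro nn_integral_monotone_convergence_SUP)
      (auto simp: incseq_def le_fun_def indicator_def intro!: mult_left_mono)
qed

lemma primitive_of_antimono_divergent:
  fixes m :: "real \<Rightarrow> real"
  assumes m: "antimono m" "\<And>t. 0 \<le> m t"
    and divergent: "(\<integral>\<^sup>+ t\<in>{0..}. ennreal (m t) \<partial>lborel) = \<infinity>"
  obtains M where "continuous_on {0..} M"
    "\<And>u v. 0 \<le> u \<Longrightarrow> u \<le> v \<Longrightarrow> M u \<le> M v"
    "\<And>u v. 0 \<le> u \<Longrightarrow> u \<le> v \<Longrightarrow> M v \<le> M u + m u * (v - u)"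
    "\<And>C. \<exists>R\<ge>0. C < M R"
    "\<And>r. 0 < m r"
proof -
  define I where "I R = (\<integral>\<^sup>+ t. ennreal (m t) * indicator {0..R} t \<partial>lborel)" for R
  define M where "M R = enn2real (I R)" for R
  have I_M: "I R = ennreal (M R)" "0 \<le> M R" if "0 \<le> R" for R
  proof -
    have "I R < \<infinity>"
      using nn_integral_antimono_interval_le[OF m(1) that] by (simp add: I_def le_less_trans)
    then show "I R = ennreal (M R)" "0 \<le> M R" by (auto simp: M_def ennreal_enn2real_if)
  qed
  have M_mono: "M u \<le> M v" if "0 \<le> u" "u \<le> v" for u v
  proof -
    have "I u \<le> I v" unfolding I_def using that by (intro nn_integral_mono) (auto simp: indicator_def)
    then show ?thesis using I_M[OF that(1)] I_M[of v] that by (simp add: ennreal_le_iff)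
  qed
  have M_tangent: "M v \<le> M u + m u * (v - u)" if "0 \<le> u" "u \<le> v" for u v
    using nn_integral_antimono_tangent[OF m(1) that] I_M[OF that(1)] I_M[of v] that m(2)[of u]
    by (simp add: I_def ennreal_plus[symmetric] del: ennreal_plus)
  have "dist (M u) (M v) \<le> m 0 * dist u v" if "u \<in> {0..}" "v \<in> {0..}" for u v
  proof -
    have *: "\<bar>M b - M a\<bar> \<le> m 0 * (b - a)" if "0 \<le> a" "a \<le> b" for a b
      using M_tangent[OF that] M_mono[OF that] antimonoD[OF m(1), of 0 a]
        mult_right_mono[of "m a" "m 0" "b - a"] that
      by simp
    show ?thesis
      using *[of u v] *[of v u] that by (cases "u \<le> v") (auto simp: dist_real_def abs_minus_commute)
  qed
  then have "continuous_on {0..} M"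
    using m(2)[of 0] by (intro lipschitz_on_continuous_on lipschitz_onI)
  moreover have M_unbounded: "\<exists>R\<ge>0. C < M R" for C
  proof (rule ccontr)
    assume "\<not> ?thesis"
    then have "I (real n) \<le> ennreal C" for n
      using I_M[of "real n"] by (auto simp: not_less ennreal_leI)
    then have "(\<integral>\<^sup>+ t\<in>{0..}. ennreal (m t) \<partial>lborel) \<le> ennreal C"
      using borel_measurable_antimono[OF m(1)]
      by (simp add: nn_integral_atLeast_0_SUP measurable_lborel2 I_def SUP_least)
    then show False using divergent by (simp add: top_unique)
  qed
  moreover have "0 < m r" for r
  proof (rule ccontr)
    assume "\<not> 0 < m r"
    then have "m (max r 0) = 0" using m antimonoD[OF m(1), of r "max r 0"] by (simp add: order_antisym)
    then have "M R \<le> M (max r 0)" if "0 \<le> R" for R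
      using M_mono[of R "max r 0"] M_tangent[of "max r 0" R] that by (cases "R \<le> max r 0") auto
    then show False using M_unbounded[of "M (max r 0)"] by fastforce
  qed
  ultimately show ?thesis using that M_mono M_tangent by blast
qed

lemma hadamard_integral_conditionE:
  fixes f :: "'a::metric_space \<Rightarrow> 'b::metric_space"
  assumes reg: "regular_map f" and had: "hadamard_integral_condition f"
  obtains x0 and m :: "real \<Rightarrow> real" where "antimono m" "\<And>t. 0 \<le> m t"
    "\<And>r x. dist x0 x \<le> r \<Longrightarrow> ereal (m r) \<le> lower_dini f x"
    "(\<integral>\<^sup>+ t\<in>{0..}. ennreal (m t) \<partial>lborel) = \<infinity>"
proof -
  obtain x0 where x0: "(\<integral>\<^sup>+ t\<in>{0..}. e2ennreal (INF x\<in>cball x0 t. lower_dini f x) \<partial>lborel) = \<infinity>"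
    using had unfolding hadamard_integral_condition_def by blast
  define md where "md t = (INF x\<in>cball x0 (max 0 t). lower_dini f x)" for t
  define m where "m t = real_of_ereal (md t)" for t
  have "0 \<le> md t" for t
    unfolding md_def by (rule INF_greatest) (meson reg regular_map_def less_imp_le)
  moreover have "md t < \<infinity>" for t
  proof -
    have "md t \<le> lower_dini f x0" unfolding md_def by (rule INF_lower) simp
    then show ?thesis using reg unfolding regular_map_def by (meson le_less_trans)
  qed
  ultimately have md: "md t = ereal (m t)" "0 \<le> m t" for t
    unfolding m_def by (auto simp: ereal_real real_of_ereal_pos)
  have md_cball: "(INF x\<in>cball x0 t. lower_dini f x) = ereal (m t)" if "0 \<le> t" for t
    using md(1)[of t] that by (simp add: md_def max_absorb2)
  have "antimono md"
    unfolding md_def by (intro antimonoI INF_superset_mono) (auto simp: subset_cball)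
  then have "antimono m"
    by (auto simp: antimono_def md)
  moreover have "ereal (m r) \<le> lower_dini f x" if "dist x0 x \<le> r" for r x
    using that INF_lower[of x "cball x0 r" "lower_dini f"] md_cball[of r] by (simp add: order_trans[OF zero_le_dist])
  moreover have "(\<integral>\<^sup>+ t\<in>{0..}. ennreal (m t) \<partial>lborel) = \<infinity>"
    using x0 by (subst (asm) nn_integral_cong[where v = "\<lambda>t. ennreal (m t) * indicator {0..} t"])
      (auto simp: indicator_def md_cball)
  ultimately show ?thesis using that md(2) by blast
qed

text \<open>Lifts from \<open>x\<close> cannot leave a fixed ball \<open>B(x0, R)\<close>, on which the lower Dini derivative is
  at least \<open>m R > 0\<close>.\<close>
lemma lower_dini_bounded_along_lifts:
  fixes f :: "'a::metric_space \<Rightarrow> 'b::metric_space"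
  assumes reg: "regular_map f" and had: "hadamard_integral_condition f" and rect: "rectifiable_path p"
  obtains \<mu> where "\<mu> > 0" "\<And>s q t. s \<le> 1 \<Longrightarrow> is_lift f {0..s} p q \<Longrightarrow> q 0 = x \<Longrightarrow> t \<in> {0..s} \<Longrightarrow>
    ereal \<mu> < lower_dini f (q t)"
proof -
  obtain x0 m where m: "antimono m" "\<And>t. 0 \<le> m t"
    and m_dini: "\<And>r x. dist x0 x \<le> r \<Longrightarrow> ereal (m r) \<le> lower_dini f x"
    and divergent: "(\<integral>\<^sup>+ t\<in>{0..}. ennreal (m t) \<partial>lborel) = \<infinity>"
    by (rule hadamard_integral_conditionE[OF reg had]) blast
  obtain M where M_cont: "continuous_on {0..} M"
    and M_mono: "\<And>u v. 0 \<le> u \<Longrightarrow> u \<le> v \<Longrightarrow> M u \<le> M v"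
    and M_tangent: "\<And>u v. 0 \<le> u \<Longrightarrow> u \<le> v \<Longrightarrow> M v \<le> M u + m u * (v - u)"
    and M_unbounded: "\<And>C. \<exists>R\<ge>0. C < M R"
    and m_pos: "\<And>r. 0 < m r"
    by (rule primitive_of_antimono_divergent[OF m divergent]) blast
  define L where "L = path_variation p"
  have L: "L u + dist (p u) (p v) \<le> L v" if "0 \<le> u" "u \<le> v" "v \<le> 1" for u v
    using path_variation_superadditive[OF rect that] by (simp add: L_def)
  obtain R where "R \<ge> 0" and R: "M (dist x0 x) + 2 * (L 1 - L 0) < M R"
    using M_unbounded[of "M (dist x0 x) + 2 * (L 1 - L 0)"] by blast
  have "ereal (m R / 2) < lower_dini f (q t)"
    if "s \<le> 1" "is_lift f {0..s} p q" "q 0 = x" "t \<in> {0..s}" for s q t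
  proof -
    have "M (dist x0 (q t)) / 2 - M (dist x0 (q 0)) / 2 \<le> L t - L 0"
    proof (rule lift_growth_le_variation_increment[where M = "\<lambda>r. M r / 2" and m = "\<lambda>r. m r / 2"])
      show "is_lift f {0..t} p q" by (rule is_lift_subset[OF that(2)]) (use that(4) in auto)
      show "ereal (m (dist x0 (q u)) / 2) < lower_dini f (q u)" for u
      proof -
        have "ereal (m (dist x0 (q u)) / 2) < ereal (m (dist x0 (q u)))"
          using m_pos[of "dist x0 (q u)"] by simp
        also have "\<dots> \<le> lower_dini f (q u)" by (rule m_dini) simp
        finally show ?thesis .
      qed
    qed (use that L M_mono M_tangent m(2) in \<open>auto intro: continuous_on_divide M_cont continuous_on_const\<close>)
    moreover have "L t + dist (p t) (p 1) \<le> L 1" using that by (intro L) auto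
    then have "L t \<le> L 1" using zero_le_dist[of "p t" "p 1"] by linarith
    ultimately have "M (dist x0 (q t)) < M R" using R \<open>q 0 = x\<close> by simp
    then have "dist x0 (q t) \<le> R" using M_mono[of R "dist x0 (q t)"] \<open>R \<ge> 0\<close> by fastforce
    have "ereal (m R / 2) < ereal (m R)" using m_pos[of R] by simp
    also have "\<dots> \<le> lower_dini f (q t)" by (rule m_dini) fact
    finally show ?thesis .
  qed
  then show ?thesis using that[of "m R / 2"] m_pos[of R] by simp
qed

section \<open>Lifting rectifiable paths\<close>

lemma Cauchy_if_dist_dominated:
  fixes X :: "nat \<Rightarrow> 'a::metric_space" and Y :: "nat \<Rightarrow> 'b::metric_space"
  assumes "Cauchy X" "\<And>m n. \<mu> * dist (Y m) (Y n) \<le> dist (X m) (X n)" "\<mu> > 0"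
  shows "Cauchy Y"
proof (rule metric_CauchyI)
  fix e :: real assume "e > 0"
  then obtain N where N: "\<And>m n. m \<ge> N \<Longrightarrow> n \<ge> N \<Longrightarrow> dist (X m) (X n) < \<mu> * e"
    using metric_CauchyD[OF assms(1), of "\<mu> * e"] assms(3) by auto
  have "dist (Y m) (Y n) < e" if "m \<ge> N" "n \<ge> N" for m n
  proof -
    have "\<mu> * dist (Y m) (Y n) < \<mu> * e" using assms(2)[of m n] N[OF that] by linarith
    then show ?thesis using assms(3) by simp
  qed
  then show "\<exists>N. \<forall>m\<ge>N. \<forall>n\<ge>N. dist (Y m) (Y n) < e" by blast
qed

lemma is_lift_extend_to_limit:
  fixes f :: "'a::metric_space \<Rightarrow> 'b::metric_space" and tn :: "nat \<Rightarrow> real"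
  assumes lh: "local_homeo f" and p: "continuous_on {0..s} p"
    and tn_bounds: "\<And>n. 0 \<le> tn n" "\<And>n. tn n \<le> s" and tn_lim: "tn \<longlonglongrightarrow> s"
    and qn: "\<And>n. is_lift f {0..tn n} p (qn n)" and z: "(\<lambda>n. qn n (tn n)) \<longlonglongrightarrow> z"
  shows "\<exists>n q. is_lift f {0..s} p q \<and> q 0 = qn n 0"
proof -
  have "0 \<le> s" using tn_bounds(1)[of 0] tn_bounds(2)[of 0] by linarith
  have "(\<lambda>n. p (tn n)) \<longlonglongrightarrow> p s"
    by (rule continuous_on_tendsto_compose[OF p tn_lim]) (use tn_bounds \<open>0 \<le> s\<close> in auto)
  moreover have "f (qn n (tn n)) = p (tn n)" for n
    using qn[of n] tn_bounds[of n] by (simp add: is_lift_def)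
  ultimately have "(\<lambda>n. f (qn n (tn n))) \<longlonglongrightarrow> p s" by simp
  moreover have "(\<lambda>n. f (qn n (tn n))) \<longlonglongrightarrow> f z"
    by (rule isCont_tendsto_compose[OF local_homeo_isCont[OF lh] z])
  ultimately have fz: "p s = f z" by (rule LIMSEQ_unique)
  obtain A V g where A: "open A" "z \<in> A" "open V" "homeomorphism A V f g"
    using local_homeoE[OF lh] by metis
  have "f ` A = V" by (rule homeomorphism_image1[OF A(4)])
  then obtain d where "d > 0" and pV: "\<And>u. u \<in> {0..s} \<Longrightarrow> dist u s < d \<Longrightarrow> p u \<in> V"
    using continuous_on_near_in_open[OF p _ A(3), of s] A(2) fz \<open>0 \<le> s\<close> by auto
  have "\<forall>\<^sub>F n in sequentially. qn n (tn n) \<in> A \<and> dist (tn n) s < d"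
    using topological_tendstoD[OF z A(1,2)] tendstoD[OF tn_lim \<open>d > 0\<close>] by (rule eventually_conj)
  then obtain n where n: "qn n (tn n) \<in> A" "dist (tn n) s < d" by (auto simp: eventually_sequentially)
  have "p ` {tn n..s} \<subseteq> V"
    using n(2) tn_bounds[of n] by (intro image_subsetI pV) (auto simp: dist_real_def)
  then have "is_lift f {0..s} p (\<lambda>u. if u \<le> tn n then qn n u else g (p u))"
    using tn_bounds[of n] n(1)
    by (intro is_lift_extend_through_chart[OF qn _ _ A(4)] continuous_on_subset[OF p]) auto
  then show ?thesis
    using tn_bounds[of n] by (intro exI[of _ n] exI[of _ "\<lambda>u. if u \<le> tn n then qn n u else g (p u)"]) auto
qed

text \<open>The end points of the lifts over \<open>[0, t]\<close>, \<open>t \<nearrow> s\<close>, form a Cauchy sequence because \<open>L\<close>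
  converges at \<open>s\<close>.\<close>
lemma is_lift_continue_to_limit:
  fixes f :: "'a::metric_space \<Rightarrow> 'b::metric_space" and L :: "real \<Rightarrow> real"
  assumes lh: "local_homeo f" and complete: "complete (UNIV::'a set)"
    and "0 < s" and p: "continuous_on {0..s} p"
    and lifts: "\<And>t. 0 \<le> t \<Longrightarrow> t < s \<Longrightarrow> \<exists>q. is_lift f {0..t} p q \<and> q 0 = x"
    and "\<mu> > 0" and L_mono: "\<And>u v. 0 \<le> u \<Longrightarrow> u \<le> v \<Longrightarrow> v \<le> s \<Longrightarrow> L u \<le> L v"
    and lipschitz: "\<And>t q u v. t < s \<Longrightarrow> is_lift f {0..t} p q \<Longrightarrow> q 0 = x \<Longrightarrow>
      0 \<le> u \<Longrightarrow> u \<le> v \<Longrightarrow> v \<le> t \<Longrightarrow> \<mu> * dist (q u) (q v) \<le> L v - L u"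
  shows "\<exists>q. is_lift f {0..s} p q \<and> q 0 = x"
proof -
  define tn where "tn n = s - s / real (Suc (Suc n))" for n
  have tn: "0 \<le> tn n" "tn n < s" for n
    using \<open>0 < s\<close> by (auto simp: tn_def field_simps)
  have tn_mono: "tn n \<le> tn m" if "n \<le> m" for n m
    using \<open>0 < s\<close> that by (auto simp: tn_def intro!: divide_left_mono)
  have tn_lim: "tn \<longlonglongrightarrow> s"
    using tendsto_diff[OF tendsto_const LIMSEQ_Suc[OF LIMSEQ_Suc[OF lim_const_over_n[of s]]]]
    unfolding tn_def[abs_def] by simp
  have "\<forall>n. \<exists>q. is_lift f {0..tn n} p q \<and> q 0 = x" using lifts tn by blast
  then obtain qn where qn: "\<And>n. is_lift f {0..tn n} p (qn n)" "\<And>n. qn n 0 = x"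
    by metis
  have qn_dist: "\<mu> * dist (qn n (tn n)) (qn m (tn m)) \<le> L (tn m) - L (tn n)" if "n \<le> m" for n m
  proof -
    have "qn m (tn n) = qn n (tn n)"
    proof (rule is_lift_unique[OF lh connected_Icc is_lift_subset[OF qn(1)[of m]] qn(1)[of n], where s=0])
      show "{0..tn n} \<subseteq> {0..tn m}" using tn_mono[OF that] by auto
    qed (use tn[of n] qn(2) in auto)
    then show ?thesis
      using lipschitz[OF tn(2)[of m] qn(1)[of m] qn(2)[of m], of "tn n" "tn m"] tn[of n] tn_mono[OF that]
      by simp
  qed
  have "incseq (\<lambda>n. L (tn n))"
    using tn tn_mono by (auto simp: incseq_def less_imp_le intro!: L_mono)
  moreover have "Bseq (\<lambda>n. L (tn n))"
  proof (rule BseqI')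
    fix n
    have "L 0 \<le> L (tn n)" "L (tn n) \<le> L s" using tn[of n] by (auto intro!: L_mono)
    then show "norm (L (tn n)) \<le> max \<bar>L 0\<bar> \<bar>L s\<bar>" by auto
  qed
  ultimately have "Cauchy (\<lambda>n. L (tn n))"
    by (intro convergent_Cauchy Bseq_monoseq_convergent incseq_imp_monoseq)
  moreover have "\<mu> * dist (qn m (tn m)) (qn n (tn n)) \<le> dist (L (tn m)) (L (tn n))" for m n
    using qn_dist[of m n] qn_dist[of n m] by (cases "m \<le> n") (auto simp: dist_real_def dist_commute)
  ultimately have "Cauchy (\<lambda>n. qn n (tn n))" using \<open>\<mu> > 0\<close> by (rule Cauchy_if_dist_dominated)
  then obtain z where "(\<lambda>n. qn n (tn n)) \<longlonglongrightarrow> z" using complete unfolding complete_def by blast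
  then show ?thesis
    using is_lift_extend_to_limit[OF lh p _ _ tn_lim qn(1)] tn qn(2) by (auto simp: less_imp_le)
qed

lemma path_lifting_by_continuation:
  fixes f :: "'a::metric_space \<Rightarrow> 'b::metric_space" and L :: "real \<Rightarrow> real"
  assumes lh: "local_homeo f" and complete: "complete (UNIV::'a set)"
    and p: "continuous_on {0..1} p" and x: "f x = p 0"
    and "\<mu> > 0" and L_mono: "\<And>u v. 0 \<le> u \<Longrightarrow> u \<le> v \<Longrightarrow> v \<le> 1 \<Longrightarrow> L u \<le> L v"
    and lipschitz: "\<And>s q u v. s \<le> 1 \<Longrightarrow> is_lift f {0..s} p q \<Longrightarrow> q 0 = x \<Longrightarrow>
      0 \<le> u \<Longrightarrow> u \<le> v \<Longrightarrow> v \<le> s \<Longrightarrow> \<mu> * dist (q u) (q v) \<le> L v - L u"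
  shows "\<exists>q. is_lift f {0..1} p q \<and> q 0 = x"
  using zero_le_one
proof (induction rule: real_interval_induct)
  case start
  have "is_lift f {0..0} p (\<lambda>_. x)" using x by (simp add: is_lift_def)
  then show ?case by blast
next
  case (step s)
  then obtain q where q: "is_lift f {0..s} p q" "q 0 = x" by blast
  obtain A V g where A: "open A" "q s \<in> A" "open V" "homeomorphism A V f g"
    using local_homeoE[OF lh] by metis
  have "f (q s) = p s" using q(1) step.hyps by (simp add: is_lift_def)
  then have "p s \<in> V" using A(2) homeomorphism_image1[OF A(4)] by (metis imageI)
  then obtain d where "d > 0" and pV: "\<And>u. u \<in> {0..1} \<Longrightarrow> dist u s < d \<Longrightarrow> p u \<in> V"
    using continuous_on_near_in_open[OF p _ A(3), of s] step.hyps by auto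
  define \<tau> where "\<tau> = min 1 (s + d / 2)"
  have "p ` {s..\<tau>} \<subseteq> V"
    using step.hyps \<open>d > 0\<close> by (intro image_subsetI pV) (auto simp: \<tau>_def dist_real_def)
  then have "is_lift f {0..\<tau>} p (\<lambda>u. if u \<le> s then q u else g (p u))"
    using step.hyps \<open>d > 0\<close>
    by (intro is_lift_extend_through_chart[OF q(1) _ _ A(4) A(2)] continuous_on_subset[OF p])
      (auto simp: \<tau>_def)
  then have "is_lift f {0..y} p (\<lambda>u. if u \<le> s then q u else g (p u))"
    if "y < s + d / 2" "y \<le> 1" for y
    using that by (elim is_lift_subset) (auto simp: \<tau>_def)
  then show ?case
    using q(2) step.hyps \<open>d > 0\<close> by (intro exI[of _ "d / 2"]) force
next
  case (limit s)
  show ?case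
  proof (rule is_lift_continue_to_limit[OF lh complete \<open>0 < s\<close> _ limit.IH \<open>\<mu> > 0\<close>])
    show "continuous_on {0..s} p" using p limit.hyps by (auto intro: continuous_on_subset)
    show "L u \<le> L v" if "0 \<le> u" "u \<le> v" "v \<le> s" for u v using that limit.hyps by (auto intro: L_mono)
    show "\<mu> * dist (q u) (q v) \<le> L v - L u"
      if "t < s" "is_lift f {0..t} p q" "q 0 = x" "0 \<le> u" "u \<le> v" "v \<le> t" for t q u v
      using lipschitz[of t q u v] that limit.hyps by auto
  qed
qed

definition rectifiable_path_lifting :: "('a::topological_space \<Rightarrow> 'b::metric_space) \<Rightarrow> bool" where
  "rectifiable_path_lifting f \<longleftrightarrow>
     (\<forall>p x. continuous_on {0..1} p \<and> rectifiable_path p \<and> f x = p 0 \<longrightarrow>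
        (\<exists>q. is_lift f {0..1} p q \<and> q 0 = x))"

lemma rectifiable_path_liftingD:
  "rectifiable_path_lifting f \<Longrightarrow> continuous_on {0..1} p \<Longrightarrow> rectifiable_path p \<Longrightarrow> f x = p 0 \<Longrightarrow>
    \<exists>q. is_lift f {0..1} p q \<and> q 0 = x"
  unfolding rectifiable_path_lifting_def by blast

lemma rectifiable_path_lifting_if_hadamard:
  fixes f :: "'a::metric_space \<Rightarrow> 'b::metric_space"
  assumes lh: "local_homeo f" and reg: "regular_map f" and complete: "complete (UNIV::'a set)"
    and had: "hadamard_integral_condition f"
  shows "rectifiable_path_lifting f"
  unfolding rectifiable_path_lifting_def
proof (intro allI impI, elim conjE)
  fix p x assume p: "continuous_on {0..1} p" and rect: "rectifiable_path p" and x: "f x = p 0"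
  obtain \<mu> where "\<mu> > 0" and dini: "\<And>s q t. s \<le> 1 \<Longrightarrow> is_lift f {0..s} p q \<Longrightarrow> q 0 = x \<Longrightarrow>
      t \<in> {0..s} \<Longrightarrow> ereal \<mu> < lower_dini f (q t)"
    by (rule lower_dini_bounded_along_lifts[OF reg had rect]) blast
  show "\<exists>q. is_lift f {0..1} p q \<and> q 0 = x"
  proof (rule path_lifting_by_continuation[OF lh complete p x \<open>\<mu> > 0\<close>])
    show "path_variation p u \<le> path_variation p v" if "0 \<le> u" "u \<le> v" "v \<le> 1" for u v
      using path_variation_superadditive[OF rect that] zero_le_dist[of "p u" "p v"] by linarith
    show "\<mu> * dist (q u) (q v) \<le> path_variation p v - path_variation p u"
      if "s \<le> 1" "is_lift f {0..s} p q" "q 0 = x" "0 \<le> u" "u \<le> v" "v \<le> s" for s q u v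
    proof (rule lift_dist_le_variation_increment)
      show "is_lift f {u..v} p q" by (rule is_lift_subset[OF that(2)]) (use that in auto)
      show "path_variation p a + dist (p a) (p b) \<le> path_variation p b"
        if "u \<le> a" "a \<le> b" "b \<le> v" for a b
        using path_variation_superadditive[OF rect] that \<open>0 \<le> u\<close> \<open>v \<le> s\<close> \<open>s \<le> 1\<close> by auto
      show "ereal \<mu> < lower_dini f (q t)" if "t \<in> {u..v}" for t
        using dini[of s q t] \<open>s \<le> 1\<close> \<open>is_lift f {0..s} p q\<close> \<open>q 0 = x\<close> that \<open>0 \<le> u\<close> \<open>v \<le> s\<close> by auto
    qed (use that \<open>\<mu> > 0\<close> in auto)
  qed
qed

lemma rectifiable_path_lifting_to_endpoint:
  assumes lift: "rectifiable_path_lifting f"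
    and p: "continuous_on {0..1} p" "rectifiable_path p" and "f z = p 1"
  obtains q where "is_lift f {0..1} p q" "q 1 = z"
proof -
  have "continuous_on {0..1} (\<lambda>t. p (1 - t))"
    by (rule continuous_on_compose2[OF p(1)]) (auto intro!: continuous_intros)
  then obtain q where q: "is_lift f {0..1} (\<lambda>t. p (1 - t)) q" "q 0 = z"
    using rectifiable_path_liftingD[OF lift _ rectifiable_path_reverse[OF p(2)]] \<open>f z = p 1\<close> by auto
  have "continuous_on {0..1} q" using q(1) by (simp add: is_lift_def)
  then have "continuous_on {0..1} (\<lambda>t. q (1 - t))"
    by (rule continuous_on_compose2) (auto intro!: continuous_intros)
  moreover have "f (q (1 - t)) = p t" if "t \<in> {0..1}" for t
  proof -
    have "1 - t \<in> {0..1}" using that by auto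
    then show ?thesis using q(1) by (auto simp: is_lift_def)
  qed
  ultimately have "is_lift f {0..1} p (\<lambda>t. q (1 - t))" by (simp add: is_lift_def)
  then show ?thesis using that[of "\<lambda>t. q (1 - t)"] q(2) by simp
qed

section \<open>Lifting the local contractions\<close>

lemma continuous_on_Times_interval_Un:
  fixes F :: "'a::topological_space \<times> real \<Rightarrow> 'b::topological_space"
  assumes "continuous_on (N \<times> {a..s}) F" "continuous_on (N \<times> {s..b}) F"
  shows "continuous_on (N \<times> {a..b}) F"
proof -
  have "continuous_on (N \<times> {a..b}) (\<lambda>z. if snd z \<le> s then F z else F z)"
  proof (rule continuous_on_cases_le)
    show "continuous_on {z \<in> N \<times> {a..b}. snd z \<le> s} F" by (rule continuous_on_subset[OF assms(1)]) auto
    show "continuous_on {z \<in> N \<times> {a..b}. s \<le> snd z} F" by (rule continuous_on_subset[OF assms(2)]) auto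
  qed (auto intro: continuous_on_snd continuous_on_id)
  then show ?thesis by simp
qed

lemma continuous_on_Times_local:
  fixes F :: "'a::t2_space \<times> 'b::t2_space \<Rightarrow> 'c::topological_space"
  assumes "\<And>y. y \<in> U \<Longrightarrow> \<exists>N. open N \<and> y \<in> N \<and> N \<subseteq> U \<and> continuous_on (N \<times> T) F"
  shows "continuous_on (U \<times> T) F"
  unfolding continuous_on_eq_continuous_within
proof
  fix w assume w: "w \<in> U \<times> T"
  then obtain N where N: "open N" "fst w \<in> N" "N \<subseteq> U" "continuous_on (N \<times> T) F"
    using assms[of "fst w"] by auto
  have wN: "w \<in> N \<times> T" using w N by (cases w) auto
  have "at w within U \<times> T = at w within N \<times> T"
    by (rule at_within_nhd[of _ "N \<times> UNIV"]) (use wN N in \<open>auto simp: open_Times\<close>)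
  moreover have "continuous (at w within N \<times> T) F"
    using N(4) wN continuous_on_eq_continuous_within by blast
  ultimately show "continuous (at w within U \<times> T) F" by simp
qed

lemma lifted_homotopy_continuous_through_chart:
  fixes f :: "'a::metric_space \<Rightarrow> 'b::metric_space" and H :: "'c::metric_space \<times> real \<Rightarrow> 'b"
    and \<Phi> :: "'c \<Rightarrow> real \<Rightarrow> 'a"
  assumes lh: "local_homeo f" and H: "continuous_on (U \<times> {0..1}) H"
    and \<Phi>: "\<And>y. y \<in> U \<Longrightarrow> is_lift f {0..1} (\<lambda>t. H (y, t)) (\<Phi> y)"
    and g: "homeomorphism A V f g" and "N \<subseteq> U" "0 \<le> \<sigma>" "\<sigma> \<le> \<tau>" "\<tau> \<le> 1"
    and HV: "H ` (N \<times> {\<sigma>..\<tau>}) \<subseteq> V" and \<Phi>A: "\<And>y. y \<in> N \<Longrightarrow> \<Phi> y \<sigma> \<in> A"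
    and F: "continuous_on (N \<times> {0..\<sigma>}) (\<lambda>z. \<Phi> (fst z) (snd z))"
  shows "continuous_on (N \<times> {0..\<tau>}) (\<lambda>z. \<Phi> (fst z) (snd z))"
proof -
  have "continuous_on (N \<times> {\<sigma>..\<tau>}) (\<lambda>z. \<Phi> (fst z) (snd z))"
  proof (rule continuous_on_eq)
    have "N \<times> {\<sigma>..\<tau>} \<subseteq> U \<times> {0..1}" using assms by auto
    then show "continuous_on (N \<times> {\<sigma>..\<tau>}) (\<lambda>z. g (H z))"
      using HV by (intro continuous_on_compose2[OF homeomorphism_cont2[OF g] continuous_on_subset[OF H]])
    show "g (H z) = \<Phi> (fst z) (snd z)" if "z \<in> N \<times> {\<sigma>..\<tau>}" for z
    proof -
      obtain y t where z: "z = (y, t)" by (cases z)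
      then have y: "y \<in> N" "y \<in> U" and t: "t \<in> {\<sigma>..\<tau>}" using that \<open>N \<subseteq> U\<close> by auto
      have "continuous_on {\<sigma>..\<tau>} (\<lambda>t. H (y, t))"
        by (rule continuous_on_compose2[OF H]) (use y assms in \<open>auto intro!: continuous_intros\<close>)
      then have "\<Phi> y t = g (H (y, t))"
        using t \<Phi>A[OF y(1)] HV y(1) assms(6-8)
        by (intro is_lift_eq_chart_inverse[OF lh g is_lift_subset[OF \<Phi>[OF y(2)]]]) auto
      then show ?thesis using z by simp
    qed
  qed
  with F show ?thesis by (rule continuous_on_Times_interval_Un)
qed

text \<open>A chart at \<open>\<Phi> y1 s\<close> controls all lifts over a neighbourhood of \<open>(y1, s)\<close>, so joint continuity
  up to any time \<open>\<sigma>\<close> close to \<open>s\<close> extends past \<open>s\<close>.\<close>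
lemma lifted_homotopy_continuous_beyond:
  fixes f :: "'a::metric_space \<Rightarrow> 'b::metric_space" and H :: "'c::metric_space \<times> real \<Rightarrow> 'b"
    and \<Phi> :: "'c \<Rightarrow> real \<Rightarrow> 'a"
  assumes lh: "local_homeo f" and H: "continuous_on (U \<times> {0..1}) H"
    and \<Phi>: "\<And>y. y \<in> U \<Longrightarrow> is_lift f {0..1} (\<lambda>t. H (y, t)) (\<Phi> y)"
    and "y1 \<in> U" "s \<in> {0..1}"
  shows "\<exists>\<delta>>0. \<forall>\<sigma>. 0 \<le> \<sigma> \<and> s - \<delta> < \<sigma> \<and> \<sigma> \<le> s \<and>
      (\<exists>N. open N \<and> y1 \<in> N \<and> N \<subseteq> U \<and> continuous_on (N \<times> {0..\<sigma>}) (\<lambda>z. \<Phi> (fst z) (snd z))) \<longrightarrow>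
      (\<exists>N. open N \<and> y1 \<in> N \<and> N \<subseteq> U \<and> continuous_on (N \<times> {0..min 1 (s + \<delta>)}) (\<lambda>z. \<Phi> (fst z) (snd z)))"
proof -
  let ?F = "\<lambda>z. \<Phi> (fst z) (snd z)"
  obtain A V g where A: "open A" "\<Phi> y1 s \<in> A" "open V" "homeomorphism A V f g"
    using local_homeoE[OF lh] by metis
  have "H (y1, s) \<in> V"
    using \<Phi>[OF \<open>y1 \<in> U\<close>] \<open>s \<in> {0..1}\<close> A(2) homeomorphism_image1[OF A(4)]
    by (metis image_eqI is_lift_def)
  then obtain d1 where "d1 > 0" and d1: "\<And>w. w \<in> U \<times> {0..1} \<Longrightarrow> dist w (y1, s) < d1 \<Longrightarrow> H w \<in> V"
    using continuous_on_near_in_open[OF H _ A(3), of "(y1, s)"] \<open>y1 \<in> U\<close> \<open>s \<in> {0..1}\<close> by auto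
  obtain d2 where "d2 > 0" and d2: "\<And>t. t \<in> {0..1} \<Longrightarrow> dist t s < d2 \<Longrightarrow> \<Phi> y1 t \<in> A"
    using continuous_on_near_in_open[of "{0..1}" "\<Phi> y1", OF _ \<open>s \<in> {0..1}\<close> A(1,2)] \<Phi>[OF \<open>y1 \<in> U\<close>]
    by (auto simp: is_lift_def)
  define \<delta> where "\<delta> = min (d1 / 2) d2 / 2"
  have \<delta>: "\<delta> > 0" "\<delta> < d1 / 2" "\<delta> < d2" using \<open>d1 > 0\<close> \<open>d2 > 0\<close> by (auto simp: \<delta>_def)
  moreover have "\<exists>N'. open N' \<and> y1 \<in> N' \<and> N' \<subseteq> U \<and> continuous_on (N' \<times> {0..min 1 (s + \<delta>)}) ?F"
    if \<sigma>: "0 \<le> \<sigma>" "s - \<delta> < \<sigma>" "\<sigma> \<le> s" and N: "open N" "y1 \<in> N" "N \<subseteq> U"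
      and F: "continuous_on (N \<times> {0..\<sigma>}) ?F" for \<sigma> N
  proof -
    define \<tau> where "\<tau> = min 1 (s + \<delta>)"
    have \<sigma>\<tau>: "\<sigma> \<le> \<tau>" "\<tau> \<le> 1" using \<sigma> \<delta> \<open>s \<in> {0..1}\<close> by (auto simp: \<tau>_def)
    have near_s: "t \<in> {0..1}" "dist t s < d1 / 2" if "t \<in> {\<sigma>..\<tau>}" for t
    proof -
      have "s - \<delta> < t" "t \<le> s + \<delta>" "t \<le> 1" using that \<sigma> by (auto simp: \<tau>_def)
      then show "t \<in> {0..1}" "dist t s < d1 / 2" using that \<sigma> \<delta> by (auto simp: dist_real_def split: abs_split)
    qed
    define N' where "N' = ball y1 (d1 / 2) \<inter> (N \<inter> (\<lambda>y. \<Phi> y \<sigma>) -` A)"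
    have "continuous_on N (\<lambda>y. ?F (y, \<sigma>))"
      by (rule continuous_on_compose2[OF F continuous_on_Pair[OF continuous_on_id continuous_on_const]])
        (use \<sigma> in auto)
    then have "open ((\<lambda>y. \<Phi> y \<sigma>) -` A \<inter> N)"
      by (intro continuous_on_open_vimage[OF N(1), THEN iffD1, rule_format, OF _ A(1)]) simp
    then have "open N'" unfolding N'_def by (simp add: Int_commute open_Int)
    have "dist \<sigma> s < d2" using \<sigma> \<delta> by (auto simp: dist_real_def split: abs_split)
    then have N': "y1 \<in> N'" "N' \<subseteq> U"
      using \<open>d1 > 0\<close> N d2 \<sigma> \<sigma>\<tau> by (auto simp: N'_def)
    have "H (y, t) \<in> V" if "y \<in> N'" "t \<in> {\<sigma>..\<tau>}" for y t
    proof (rule d1)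
      show "(y, t) \<in> U \<times> {0..1}" using that N' near_s by auto
      have "dist y y1 < d1 / 2" using that(1) by (simp add: N'_def dist_commute)
      then show "dist (y, t) (y1, s) < d1"
        unfolding dist_Pair_Pair using near_s[OF that(2)] by (simp add: sqrt_sum_squares_half_less)
    qed
    then have "continuous_on (N' \<times> {0..\<tau>}) ?F"
      using \<sigma>(1) \<sigma>\<tau> N' F
      by (intro lifted_homotopy_continuous_through_chart[OF lh H \<Phi> A(4) _ _ _ _ _ _ continuous_on_subset[OF F]])
        (auto simp: N'_def)
    then show ?thesis using \<open>open N'\<close> N' by (auto simp: \<tau>_def)
  qed
  ultimately show ?thesis by blast
qed

lemma lifted_homotopy_continuous:
  fixes f :: "'a::metric_space \<Rightarrow> 'b::metric_space" and H :: "'c::metric_space \<times> real \<Rightarrow> 'b"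
    and \<Phi> :: "'c \<Rightarrow> real \<Rightarrow> 'a"
  assumes lh: "local_homeo f" and U: "open U" and H: "continuous_on (U \<times> {0..1}) H"
    and \<Phi>: "\<And>y. y \<in> U \<Longrightarrow> is_lift f {0..1} (\<lambda>t. H (y, t)) (\<Phi> y)"
    and \<Phi>0: "continuous_on U (\<lambda>y. \<Phi> y 0)"
  shows "continuous_on (U \<times> {0..1}) (\<lambda>z. \<Phi> (fst z) (snd z))"
proof -
  let ?F = "\<lambda>z. \<Phi> (fst z) (snd z)"
  define P where "P y1 s \<longleftrightarrow> (\<exists>N. open N \<and> y1 \<in> N \<and> N \<subseteq> U \<and> continuous_on (N \<times> {0..s}) ?F)"
    for y1 s
  have P_downward: "P y1 s'" if "P y1 s" "s' \<le> s" for y1 s s'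
  proof -
    have "N \<times> {0..s'} \<subseteq> N \<times> {0..s}" for N :: "'c set" using that(2) by auto
    then show ?thesis using that(1) unfolding P_def by (blast intro: continuous_on_subset)
  qed
  have beyond: "\<exists>\<delta>>0. \<forall>\<sigma>. 0 \<le> \<sigma> \<and> s - \<delta> < \<sigma> \<and> \<sigma> \<le> s \<and> P y1 \<sigma> \<longrightarrow> P y1 (min 1 (s + \<delta>))"
    if "y1 \<in> U" "s \<in> {0..1}" for y1 s
    unfolding P_def by (rule lifted_homotopy_continuous_beyond[OF lh H \<Phi> that])
  have "P y1 1" if y1: "y1 \<in> U" for y1
    using zero_le_one
  proof (induction rule: real_interval_induct)
    case start
    have "continuous_on (U \<times> {0..0}) (\<lambda>z. \<Phi> (fst z) 0)"
      by (rule continuous_on_compose2[OF \<Phi>0 continuous_on_fst[OF continuous_on_id]]) auto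
    then have "continuous_on (U \<times> {0..0}) ?F" by (rule continuous_on_eq) auto
    then show ?case using U y1 by (auto simp: P_def)
  next
    case (step s)
    obtain \<delta> where "\<delta> > 0" "P y1 (min 1 (s + \<delta>))"
      using beyond[OF y1, of s] step by auto
    then show ?case using \<open>\<delta> > 0\<close> by (intro exI[of _ \<delta>]) (auto intro: P_downward)
  next
    case (limit s)
    obtain \<delta> where "\<delta> > 0"
      and beyond_s: "\<And>\<sigma>. 0 \<le> \<sigma> \<Longrightarrow> s - \<delta> < \<sigma> \<Longrightarrow> \<sigma> \<le> s \<Longrightarrow> P y1 \<sigma> \<Longrightarrow> P y1 (min 1 (s + \<delta>))"
      using beyond[OF y1, of s] limit.hyps by auto
    have "P y1 (max 0 (s - \<delta> / 2))" using limit.hyps \<open>\<delta> > 0\<close> by (intro limit.IH) auto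
    then have "P y1 (min 1 (s + \<delta>))" using beyond_s[of "max 0 (s - \<delta> / 2)"] limit.hyps \<open>\<delta> > 0\<close> by auto
    then show ?case using limit.hyps \<open>\<delta> > 0\<close> by (auto intro: P_downward)
  qed
  then show ?thesis unfolding P_def by (rule continuous_on_Times_local) blast
qed

definition evenly_covered :: "('a::topological_space \<Rightarrow> 'b::topological_space) \<Rightarrow> 'b set \<Rightarrow> bool" where
  "evenly_covered f U \<longleftrightarrow> (\<exists>v. \<Union>v = f -` U \<and> (\<forall>u\<in>v. open u) \<and> pairwise disjnt v \<and>
     (\<forall>u\<in>v. \<exists>q. homeomorphism u U f q))"

text \<open>The sheet through \<open>x \<in> f\<^sup>-\<^sup>1(y0)\<close> is the image of the section \<open>\<sigma> x\<close>: the end points of the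
  lifts from \<open>x\<close> of the contraction tracks.\<close>
lemma contraction_lift_sections:
  fixes f :: "'a::metric_space \<Rightarrow> 'b::metric_space"
  assumes lh: "local_homeo f" and lift: "rectifiable_path_lifting f"
    and U: "open U" and H: "continuous_on (U \<times> {0..1}) H"
    and H0: "\<And>y. y \<in> U \<Longrightarrow> H (y, 0) = y0" and H1: "\<And>y. y \<in> U \<Longrightarrow> H (y, 1) = y"
    and rect: "\<And>y. y \<in> U \<Longrightarrow> rectifiable_path (\<lambda>t. H (y, t))"
  obtains \<sigma> where "\<And>x y. f x = y0 \<Longrightarrow> y \<in> U \<Longrightarrow> f (\<sigma> x y) = y"
    "\<And>x. f x = y0 \<Longrightarrow> continuous_on U (\<sigma> x)"
    "\<And>z. f z \<in> U \<Longrightarrow> \<exists>x. f x = y0 \<and> \<sigma> x (f z) = z"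
    "\<And>x1 x2 y. f x1 = y0 \<Longrightarrow> f x2 = y0 \<Longrightarrow> y \<in> U \<Longrightarrow> \<sigma> x1 y = \<sigma> x2 y \<Longrightarrow> x1 = x2"
proof -
  have track: "continuous_on {0..1} (\<lambda>t. H (y, t))" if "y \<in> U" for y
    by (rule continuous_on_compose2[OF H]) (use that in \<open>auto intro!: continuous_intros\<close>)
  have "\<exists>q. f x = y0 \<and> y \<in> U \<longrightarrow> is_lift f {0..1} (\<lambda>t. H (y, t)) q \<and> q 0 = x" for x y
    using rectifiable_path_liftingD[OF lift track rect, of y x] H0[of y] by auto
  then obtain \<Lambda> where \<Lambda>: "\<And>x y. f x = y0 \<Longrightarrow> y \<in> U \<Longrightarrow> is_lift f {0..1} (\<lambda>t. H (y, t)) (\<Lambda> x y)"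
    "\<And>x y. f x = y0 \<Longrightarrow> y \<in> U \<Longrightarrow> \<Lambda> x y 0 = x"
    by metis
  define \<sigma> where "\<sigma> x y = \<Lambda> x y 1" for x y
  have f\<sigma>: "f (\<sigma> x y) = y" if "f x = y0" "y \<in> U" for x y
    using \<Lambda>(1)[OF that] H1[OF that(2)] by (simp add: \<sigma>_def is_lift_def)
  have \<sigma>_cont: "continuous_on U (\<sigma> x)" if "f x = y0" for x
  proof -
    have "continuous_on (U \<times> {0..1}) (\<lambda>z. \<Lambda> x (fst z) (snd z))"
      using \<Lambda>[OF that] by (intro lifted_homotopy_continuous[OF lh U H]) (auto intro: continuous_on_eq[OF continuous_on_const])
    then have "continuous_on U (\<lambda>y. (\<lambda>z. \<Lambda> x (fst z) (snd z)) (y, 1::real))"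
      by (rule continuous_on_compose2[OF _ continuous_on_Pair[OF continuous_on_id continuous_on_const]]) auto
    then show ?thesis by (simp add: \<sigma>_def[abs_def])
  qed
  have \<sigma>_onto: "\<exists>x. f x = y0 \<and> \<sigma> x (f z) = z" if z: "f z \<in> U" for z
  proof -
    have "f z = H (f z, 1)" using H1[OF z] by simp
    then obtain q where q: "is_lift f {0..1} (\<lambda>t. H (f z, t)) q" "q 1 = z"
      by (rule rectifiable_path_lifting_to_endpoint[OF lift track[OF z] rect[OF z]])
    have x: "f (q 0) = y0" using q(1) H0[OF z] by (simp add: is_lift_def)
    have "\<Lambda> (q 0) (f z) 1 = q 1"
      using is_lift_unique[OF lh connected_Icc \<Lambda>(1)[OF x z] q(1), of 0 1] \<Lambda>(2)[OF x z] by simp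
    then show ?thesis using x q(2) by (auto simp: \<sigma>_def)
  qed
  have \<sigma>_inj: "x1 = x2" if "f x1 = y0" "f x2 = y0" "y \<in> U" "\<sigma> x1 y = \<sigma> x2 y" for x1 x2 y
  proof -
    have "\<Lambda> x1 y 0 = \<Lambda> x2 y 0"
      using is_lift_unique[OF lh connected_Icc \<Lambda>(1)[OF that(1,3)] \<Lambda>(1)[OF that(2,3)], of 1 0] that(4)
      by (simp add: \<sigma>_def)
    then show ?thesis using \<Lambda>(2)[OF that(1,3)] \<Lambda>(2)[OF that(2,3)] by simp
  qed
  show ?thesis by (rule that[OF f\<sigma> \<sigma>_cont \<sigma>_onto \<sigma>_inj])
qed

lemma evenly_covered_if_rectifiably_contractible:
  fixes f :: "'a::metric_space \<Rightarrow> 'b::metric_space"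
  assumes lh: "local_homeo f" and lift: "rectifiable_path_lifting f"
    and U: "open U" and H: "continuous_on (U \<times> {0..1}) H"
    and H0: "\<And>y. y \<in> U \<Longrightarrow> H (y, 0) = y0" and H1: "\<And>y. y \<in> U \<Longrightarrow> H (y, 1) = y"
    and rect: "\<And>y. y \<in> U \<Longrightarrow> rectifiable_path (\<lambda>t. H (y, t))"
  shows "evenly_covered f U"
  using H0 H1 rect
proof (rule contraction_lift_sections[OF lh lift U H])
  fix \<sigma> assume f\<sigma>: "\<And>x y. f x = y0 \<Longrightarrow> y \<in> U \<Longrightarrow> f (\<sigma> x y) = y"
    and \<sigma>_cont: "\<And>x. f x = y0 \<Longrightarrow> continuous_on U (\<sigma> x)"
    and \<sigma>_onto: "\<And>z. f z \<in> U \<Longrightarrow> \<exists>x. f x = y0 \<and> \<sigma> x (f z) = z"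
    and \<sigma>_inj: "\<And>x1 x2 y. f x1 = y0 \<Longrightarrow> f x2 = y0 \<Longrightarrow> y \<in> U \<Longrightarrow> \<sigma> x1 y = \<sigma> x2 y \<Longrightarrow> x1 = x2"
  define v where "v = (\<lambda>x. \<sigma> x ` U) ` (f -` {y0})"
  have "z \<in> \<Union>v" if z: "f z \<in> U" for z
  proof -
    obtain x where "f x = y0" "\<sigma> x (f z) = z" using \<sigma>_onto[OF z] by blast
    then have "z \<in> \<sigma> x ` U" "\<sigma> x ` U \<in> v" using z by (force simp: v_def)+
    then show ?thesis by blast
  qed
  then have "\<Union>v = f -` U" using f\<sigma> by (auto simp: v_def)
  moreover have "\<forall>u\<in>v. open u"
    unfolding v_def using local_homeo_section_open[OF lh U \<sigma>_cont f\<sigma>] by blast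
  moreover have "pairwise disjnt v"
  proof -
    have "\<sigma> x1 ` U \<inter> \<sigma> x2 ` U = {}"
      if "f x1 = y0" "f x2 = y0" "\<sigma> x1 ` U \<noteq> \<sigma> x2 ` U" for x1 x2
    proof (rule ccontr)
      assume "\<sigma> x1 ` U \<inter> \<sigma> x2 ` U \<noteq> {}"
      then obtain y1 y2 where y: "y1 \<in> U" "y2 \<in> U" "\<sigma> x1 y1 = \<sigma> x2 y2" by blast
      then have "y1 = y2" using f\<sigma> that(1,2) by metis
      then have "x1 = x2" using \<sigma>_inj[OF that(1,2)] y by blast
      then show False using that(3) by simp
    qed
    then show ?thesis unfolding v_def pairwise_def disjnt_def by blast
  qed
  moreover have "\<forall>u\<in>v. \<exists>q. homeomorphism u U f q"
  proof -
    have "homeomorphism (\<sigma> x ` U) U f (\<sigma> x)" if x: "f x = y0" for x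
    proof (rule homeomorphismI)
      show "continuous_on (\<sigma> x ` U) f" by (rule local_homeo_continuous_on[OF lh])
      show "continuous_on U (\<sigma> x)" by (rule \<sigma>_cont[OF x])
      show "f ` \<sigma> x ` U \<subseteq> U" using f\<sigma>[OF x] by auto
      show "\<sigma> x (f w) = w" if "w \<in> \<sigma> x ` U" for w using that f\<sigma>[OF x] by auto
    qed (use f\<sigma>[OF x] in auto)
    then show ?thesis unfolding v_def by blast
  qed
  ultimately show ?thesis unfolding evenly_covered_def by blast
qed

lemma covering_space_UNIV_if_evenly_covered:
  assumes "continuous_on UNIV f" "surj f" and evenly: "\<And>y. \<exists>U. y \<in> U \<and> open U \<and> evenly_covered f U"
  shows "covering_space UNIV f UNIV"
proof (rule covering_spaceI[OF assms(1,2)])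
  fix y
  obtain U v where "y \<in> U" "open U" "\<Union>v = f -` U" "\<forall>u\<in>v. open u" "pairwise disjnt v"
    "\<forall>u\<in>v. \<exists>q. homeomorphism u U f q"
    using evenly[of y] unfolding evenly_covered_def by (elim exE conjE) (rule that)
  then show "\<exists>T. y \<in> T \<and> openin (top_of_set UNIV) T \<and>
      (\<exists>v. \<Union>v = UNIV \<inter> f -` T \<and> (\<forall>u\<in>v. openin (top_of_set UNIV) u) \<and> pairwise disjnt v \<and>
        (\<forall>u\<in>v. \<exists>q. homeomorphism u T f q))"
    unfolding subtopology_UNIV open_openin[symmetric] Int_UNIV_left by blast
qed

lemma surj_if_evenly_covered:
  fixes f :: "'a::topological_space \<Rightarrow> 'b::topological_space"
  assumes "connected (UNIV::'b set)" and "open (range f)"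
    and evenly: "\<And>y. \<exists>U. y \<in> U \<and> open U \<and> evenly_covered f U"
  shows "surj f"
proof -
  have away: "\<exists>U. open U \<and> y \<in> U \<and> U \<subseteq> - range f" if "y \<notin> range f" for y
  proof -
    obtain U v where U: "y \<in> U" "open U" and v: "\<Union>v = f -` U" "\<forall>u\<in>v. \<exists>q. homeomorphism u U f q"
      using evenly[of y] unfolding evenly_covered_def by (elim exE conjE) (rule that)
    have "f z \<notin> U" for z
    proof
      assume "f z \<in> U"
      then have "z \<in> \<Union>v" using v(1) by simp
      then obtain u where "u \<in> v" "z \<in> u" by blast
      then obtain q where "homeomorphism u U f q" using v(2) by blast
      then have "f ` u = U" by (simp add: homeomorphism_image1)
      then show False using U(1) \<open>z \<in> u\<close> that by blast
    qed
    then show ?thesis using U by blast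
  qed
  have "open (- range f)"
    unfolding open_subopen[of "- range f"]
  proof
    fix y assume "y \<in> - range f"
    then show "\<exists>U. open U \<and> y \<in> U \<and> U \<subseteq> - range f" using away ComplD by metis
  qed
  then have "range f \<inter> UNIV = {} \<or> - range f \<inter> UNIV = {}"
    by (rule connectedD[OF assms(1,2)]) auto
  then show ?thesis by blast
qed

theorem theorem5:
  fixes f :: "'a::metric_space \<Rightarrow> 'b::metric_space"
  assumes no_isolated: "\<forall>x::'a. x islimpt (UNIV::'a set)"
    and lh: "local_homeo f"
    and reg: "regular_map f"
    and complete_X: "complete (UNIV::'a set)"
    and pc_Y: "path_connected (UNIV::'b set)"
    and lrc_Y: "locally_R_contractible (UNIV::'b set)"
    and had: "hadamard_integral_condition f"
  shows "covering_space (UNIV::'a set) f (UNIV::'b set)"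
proof -
  have lift: "rectifiable_path_lifting f"
    by (rule rectifiable_path_lifting_if_hadamard[OF lh reg complete_X had])
  have evenly: "\<exists>U. y0 \<in> U \<and> open U \<and> evenly_covered f U" for y0
  proof -
    obtain U H where U: "openin (top_of_set UNIV) U" "y0 \<in> U" and H: "continuous_on (U \<times> {0..1}) H"
      and H01: "\<forall>y\<in>U. H (y, 0) = y0 \<and> H (y, 1) = y" and rect: "\<forall>y\<in>U. rectifiable_path (\<lambda>t. H (y, t))"
      using lrc_Y[unfolded locally_R_contractible_def, rule_format, OF UNIV_I[of y0]]
      by (elim exE conjE) (rule that)
    have "open U" using U(1) by simp
    moreover have "evenly_covered f U"
      using H01 rect by (intro evenly_covered_if_rectifiably_contractible[OF lh lift \<open>open U\<close> H]) auto
    ultimately show ?thesis using U(2) by blast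
  qed
  have "surj f"
    using path_connected_imp_connected[OF pc_Y] open_range_local_homeo[OF lh] evenly
    by (rule surj_if_evenly_covered)
  then show ?thesis
    by (rule covering_space_UNIV_if_evenly_covered[OF local_homeo_continuous_on[OF lh] _ evenly])
qed

end
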